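(* Let $(X,d)$ be a separable complete metric space, $(\Omega,\mathsf{F},\mathbb{P})$ a probability space, and $\mathcal{F}$ a sub-$\sigma$-algebra of $\mathsf{F}$. Let $\phi:X\times X\to[0,\infty)$ be a Carath\'eodory distance and let $S\subseteq X$ be a non-empty Borel set. Then for every $\mathcal{F}$-measurable $X$-valued random variable $x$ and every $\varepsilon>0$ there exists an $\mathcal{F}$-measurable $X$-valued random variable $s$ such that $s\in S$ almost surely and $\mathbb{E}[\phi(s,x)]\le\mathbb{E}[\mathrm{dist}^\phi_S(x)]+\varepsilon$.
   Context: A Carath\'eodory distance is a function $\phi:X\times X\to[0,\infty)$ continuous in its left argument and Borel measurable in its right argument. $\mathrm{dist}^\phi_S(x):=\inf_{s\in S}\phi(s,x)$. *)

theory Defs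
  imports "HOL-Probability.Probability"
begin

definition caratheodory_distance :: "('a::topological_space \<Rightarrow> 'a \<Rightarrow> real) \<Rightarrow> bool" where
  "caratheodory_distance \<phi> \<longleftrightarrow>
     (\<forall>s y. 0 \<le> \<phi> s y) \<and>
     (\<forall>y. continuous_on UNIV (\<lambda>s. \<phi> s y)) \<and>
     (\<forall>s. (\<lambda>y. \<phi> s y) \<in> borel_measurable borel)"

definition dist_phi :: "('a \<Rightarrow> 'a \<Rightarrow> real) \<Rightarrow> 'a set \<Rightarrow> 'a \<Rightarrow> real" where
  "dist_phi \<phi> S x = (INF s\<in>S. \<phi> s x)"

end

theory Submission
  imports Defs
begin

text \<open>Since \<open>\<phi>\<close> is continuous in its left argument, the infimum over \<open>S\<close> equals the infimum
over a countable dense subset \<open>T \<subseteq> S\<close>, and \<open>T\<close> is the range of a sequence \<open>d\<close>. Hence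
\<open>dist\<^sup>\<phi>\<^sub>S\<close> is Borel, and choosing for each \<open>\<omega>\<close> the least \<open>n\<close> with
\<open>\<phi>(d n, x \<omega>) < dist\<^sup>\<phi>\<^sub>S(x \<omega>) + \<epsilon>\<close> gives an \<open>\<F>\<close>-measurable selection with values in \<open>S\<close>
that is \<open>\<epsilon>\<close>-optimal at every \<open>\<omega>\<close>, not only in expectation.\<close>

lemma dist_phi_nonneg:
  assumes "S \<noteq> {}" and "\<And>s. s \<in> S \<Longrightarrow> 0 \<le> \<phi> s y"
  shows "0 \<le> dist_phi \<phi> S y"
  unfolding dist_phi_def using assms by (intro cINF_greatest) auto

lemma dist_phi_dense_subset:
  fixes \<phi> :: "'a::topological_space \<Rightarrow> 'a \<Rightarrow> real"
  assumes cont: "continuous_on UNIV (\<lambda>s. \<phi> s y)"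
    and bdd: "bdd_below ((\<lambda>s. \<phi> s y) ` S)"
    and "T \<noteq> {}" "T \<subseteq> S" "S \<subseteq> closure T"
  shows "dist_phi \<phi> S y = dist_phi \<phi> T y"
proof (rule antisym)
  have bddT: "bdd_below ((\<lambda>s. \<phi> s y) ` T)"
    using bdd \<open>T \<subseteq> S\<close> by (meson bdd_below_mono image_mono)
  show "dist_phi \<phi> S y \<le> dist_phi \<phi> T y"
    unfolding dist_phi_def using assms by (intro cINF_superset_mono) auto
  let ?above = "{z. dist_phi \<phi> T y \<le> \<phi> z y}"
  have "T \<subseteq> ?above"
    using bddT unfolding dist_phi_def by (auto intro: cINF_lower)
  moreover have "closed ?above"
    using cont by (intro closed_Collect_le) auto
  ultimately have "S \<subseteq> ?above"
    using \<open>S \<subseteq> closure T\<close> closure_minimal by blast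
  then show "dist_phi \<phi> T y \<le> dist_phi \<phi> S y"
    unfolding dist_phi_def using assms by (intro cINF_greatest) auto
qed

lemma caratheodory_distance_countable_subset:
  fixes \<phi> :: "'a::{metric_space, second_countable_topology} \<Rightarrow> 'a \<Rightarrow> real"
  assumes "caratheodory_distance \<phi>" and "S \<noteq> {}"
  obtains T where "countable T" "T \<noteq> {}" "T \<subseteq> S" "dist_phi \<phi> S = dist_phi \<phi> T"
proof -
  obtain T where T: "countable T" "T \<subseteq> S" "S \<subseteq> closure T"
    using separable by blast
  with \<open>S \<noteq> {}\<close> have "T \<noteq> {}" by auto
  have eq: "dist_phi \<phi> S y = dist_phi \<phi> T y" for y
  proof (rule dist_phi_dense_subset)
    show "continuous_on UNIV (\<lambda>s. \<phi> s y)"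
      using assms(1) unfolding caratheodory_distance_def by blast
    show "bdd_below ((\<lambda>s. \<phi> s y) ` S)"
      using assms(1) unfolding caratheodory_distance_def by (meson bdd_belowI2)
  qed (fact T \<open>T \<noteq> {}\<close>)+
  show ?thesis
    using that[OF T(1) \<open>T \<noteq> {}\<close> T(2) ext[OF eq]] .
qed

lemma borel_measurable_dist_phi:
  fixes \<phi> :: "'a::{metric_space, second_countable_topology} \<Rightarrow> 'a \<Rightarrow> real"
  assumes "caratheodory_distance \<phi>" and "S \<noteq> {}"
  shows "dist_phi \<phi> S \<in> borel_measurable borel"
proof -
  obtain T where "countable T" "T \<noteq> {}" "T \<subseteq> S"
    and eq: "dist_phi \<phi> S = dist_phi \<phi> T"
    by (rule caratheodory_distance_countable_subset[OF assms])
  have "(\<lambda>y. INF t\<in>T. \<phi> t y) \<in> borel_measurable borel"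
    using assms(1) unfolding caratheodory_distance_def
    by (intro borel_measurable_cINF_real[OF \<open>countable T\<close>]) blast
  then show ?thesis
    unfolding eq dist_phi_def .
qed

lemma caratheodory_measurable_eps_selection:
  fixes \<phi> :: "'a::{metric_space, second_countable_topology} \<Rightarrow> 'a \<Rightarrow> real"
  assumes carath: "caratheodory_distance \<phi>" and "S \<noteq> {}"
    and x: "x \<in> borel_measurable F" and "\<epsilon> > 0"
  obtains s where "s \<in> borel_measurable F" "\<And>\<omega>. s \<omega> \<in> S"
    "\<And>\<omega>. \<phi> (s \<omega>) (x \<omega>) < dist_phi \<phi> S (x \<omega>) + \<epsilon>"
proof -
  obtain T where T: "countable T" "T \<noteq> {}" "T \<subseteq> S"
    and eq: "dist_phi \<phi> S = dist_phi \<phi> T"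
    by (rule caratheodory_distance_countable_subset[OF carath \<open>S \<noteq> {}\<close>])
  define d where "d = from_nat_into T"
  have range_d: "range d = T"
    unfolding d_def using range_from_nat_into[OF T(2,1)] .
  have "\<exists>n. \<phi> (d n) y < dist_phi \<phi> S y + \<epsilon>" for y
  proof -
    have "bdd_below ((\<lambda>s. \<phi> s y) ` T)"
      using carath unfolding caratheodory_distance_def by (meson bdd_belowI2)
    moreover have "(INF t\<in>T. \<phi> t y) < dist_phi \<phi> S y + \<epsilon>"
      using \<open>\<epsilon> > 0\<close> by (simp add: eq dist_phi_def)
    ultimately show ?thesis
      using cINF_less_iff[OF \<open>T \<noteq> {}\<close>] range_d by auto
  qed
  define N where "N \<omega> = (LEAST n. \<phi> (d n) (x \<omega>) < dist_phi \<phi> S (x \<omega>) + \<epsilon>)" for \<omega>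
  have [measurable]: "(\<lambda>\<omega>. \<phi> (d n) (x \<omega>)) \<in> borel_measurable F" for n
    using carath unfolding caratheodory_distance_def by (blast intro: measurable_compose[OF x])
  have [measurable]: "(\<lambda>\<omega>. dist_phi \<phi> S (x \<omega>)) \<in> borel_measurable F"
    using measurable_compose[OF x borel_measurable_dist_phi[OF carath \<open>S \<noteq> {}\<close>]] .
  have "N \<in> measurable F (count_space UNIV)"
    unfolding N_def by measurable
  then have "(\<lambda>\<omega>. d (N \<omega>)) \<in> borel_measurable F"
    by (rule measurable_compose) simp
  moreover have "d (N \<omega>) \<in> S" for \<omega>
    using range_d T(3) by auto
  moreover have "\<phi> (d (N \<omega>)) (x \<omega>) < dist_phi \<phi> S (x \<omega>) + \<epsilon>" for \<omega>
    unfolding N_def by (rule LeastI_ex) fact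
  ultimately show ?thesis by (rule that)
qed

theorem corollary2p11:
  fixes M F :: "'w measure"
    and \<phi> :: "'a::polish_space \<Rightarrow> 'a \<Rightarrow> real"
    and S :: "'a set"
    and x :: "'w \<Rightarrow> 'a"
    and \<epsilon> :: real
  assumes "prob_space M"
    and "subalgebra M F"
    and "caratheodory_distance \<phi>"
    and "S \<in> sets borel" and "S \<noteq> {}"
    and "x \<in> borel_measurable F"
    and "\<epsilon> > 0"
  shows "\<exists>s \<in> borel_measurable F.
           (AE \<omega> in M. s \<omega> \<in> S) \<and>
           (\<integral>\<^sup>+ \<omega>. ennreal (\<phi> (s \<omega>) (x \<omega>)) \<partial>M)
             \<le> (\<integral>\<^sup>+ \<omega>. ennreal (dist_phi \<phi> S (x \<omega>)) \<partial>M) + ennreal \<epsilon>"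
proof -
  interpret prob_space M by fact
  obtain s where s: "s \<in> borel_measurable F" "\<And>\<omega>. s \<omega> \<in> S"
    and s_opt: "\<And>\<omega>. \<phi> (s \<omega>) (x \<omega>) < dist_phi \<phi> S (x \<omega>) + \<epsilon>"
    using caratheodory_measurable_eps_selection assms(3,5,6,7) by blast
  have "(\<lambda>\<omega>. dist_phi \<phi> S (x \<omega>)) \<in> borel_measurable M"
    using measurable_from_subalg[OF assms(2)] assms(3,5,6)
      measurable_compose[OF _ borel_measurable_dist_phi] by blast
  then have dist_M: "(\<lambda>\<omega>. ennreal (dist_phi \<phi> S (x \<omega>))) \<in> borel_measurable M"
    by measurable
  have "(\<integral>\<^sup>+ \<omega>. ennreal (\<phi> (s \<omega>) (x \<omega>)) \<partial>M)
        \<le> (\<integral>\<^sup>+ \<omega>. ennreal (dist_phi \<phi> S (x \<omega>)) + ennreal \<epsilon> \<partial>M)"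
  proof (rule nn_integral_mono)
    fix \<omega>
    have "0 \<le> dist_phi \<phi> S (x \<omega>)"
      using assms(3,5) unfolding caratheodory_distance_def by (intro dist_phi_nonneg) auto
    then show "ennreal (\<phi> (s \<omega>) (x \<omega>)) \<le> ennreal (dist_phi \<phi> S (x \<omega>)) + ennreal \<epsilon>"
      using s_opt[of \<omega>] \<open>\<epsilon> > 0\<close> by (simp flip: ennreal_plus)
  qed
  also have "\<dots> = (\<integral>\<^sup>+ \<omega>. ennreal (dist_phi \<phi> S (x \<omega>)) \<partial>M) + ennreal \<epsilon>"
    using dist_M by (simp add: nn_integral_add emeasure_space_1)
  finally have "(\<integral>\<^sup>+ \<omega>. ennreal (\<phi> (s \<omega>) (x \<omega>)) \<partial>M)
      \<le> (\<integral>\<^sup>+ \<omega>. ennreal (dist_phi \<phi> S (x \<omega>)) \<partial>M) + ennreal \<epsilon>" .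
  with s show ?thesis by (intro bexI[of _ s]) auto
qed

end
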